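(* Consider $k$ agents in a multi-agent environment $\phi$ controlled by the VCG mechanism with Clark pivot payments, with the interaction protocol, rational valuation functions and realisable cumulative utility as described in the context. Suppose each agent $i$'s true valuation function at each time $t$ is its rational valuation function $v_{t,i}(\overline{h_{t-1}},\cdot)$. Then the protocol is Bayes–Nash incentive compatible with respect to each agent's realisable cumulative utility at every time step: for every time $t$, every joint history $\overline{h_{t-1}}$, every agent $i$ and every function $\widetilde v_{t,i}:\mathcal{X}\to\mathbb{R}$, if all agents $j\neq i$ submit their true rational valuation functions $v_{t,j}(\overline{h_{t-1}},\cdot)$, then the expected realisable cumulative utility of agent $i$ (expectation over $\overline{or_t}\sim\phi(\cdot\mid \overline{h_{t-1}}\,\overline{a_t})$, where $\overline{a_t}$ is the joint action selected by the mechanism from the submitted functions) when it submits $v_{t,i}(\overline{h_{t-1}},\cdot)$ is at least as large as when it submits $\widetilde v_{t,i}$.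
   Context: Setting. There are $k$ agents; agent $i$ has finite action set $\mathcal{A}_i$, finite observation set $\mathcal{O}_i$ and finite reward set $\mathcal{R}\subset\mathbb{R}$. A joint action is $\overline{a}=(a_1,\dots,a_k)$ and a joint percept is $\overline{or}=(o_1r_1,\dots,o_kr_k)$; $r_{t,i}$ denotes agent $i$'s reward component of $\overline{or_t}$. A joint history is $\overline{h_{t}}=\overline{a_1}\,\overline{or_1}\cdots\overline{a_t}\,\overline{or_t}$ ($\overline{h_0}$ empty). The multi-agent environment $\phi$ gives conditional probabilities $\phi(\overline{or_t}\mid \overline{h_{t-1}}\,\overline{a_t})$ of the next joint percept. $\mathcal{X}$ is the set of admissible joint actions. Mechanism. Given submitted functions $\overline{v}=(v_1,\dots,v_k)$ with $v_j:\mathcal{X}\to\mathbb{R}$, the social choice is $f(\overline v)\in\arg\max_{\overline a\in\mathcal{X}}\sum_j v_j(\overline a)$ and agent $i$ pays $p_i(\overline v)=\max_{\overline a}\sum_{j\neq i}v_j(\overline a)-\sum_{j\neq i}v_j(f(\overline v))$. Protocol: at time $t$ each agent $i$ submits $v_{t,i}$, the joint action $\overline{a_t}=f(\overline{v_t})$ is executed, $\overline{or_t}\sim\phi(\cdot\mid\overline{h_{t-1}}\,\overline{a_t})$ is sampled, agent $i$ receives $or_{t,i}$ and is charged $p_i(\overline{v_t})$. Rational valuation functions (full knowledge of $\phi$ and the mechanism; agent $i$ has horizon $m_i$), defined by backward induction: $q_{t,i}(\overline{h_{t-1}},\overline{a_t})=0$ if $t>m_i$, else $\sum_{\overline{or_t}}\phi(\overline{or_t}\mid\overline{h_{t-1}}\,\overline{a_t})[r_{t,i}+\overline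 q_{t+1,i}(\overline{h_{t-1}}\,\overline{a_t}\,\overline{or_t})]$; $\overline q_{t,i}(\overline{h_{t-1}})=q_{t,i}(\overline{h_{t-1}},f(\overline{v_t}))$; $c_{t,i}(\overline{h_{t-1}},\overline{a_t})=0$ if $t\ge m_i$, else $\sum_{\overline{or_t}}\phi(\overline{or_t}\mid\overline{h_{t-1}}\,\overline{a_t})\,\overline c_{t+1,i}(\overline{h_{t-1}}\,\overline{a_t}\,\overline{or_t})$; $\overline c_{t,i}(\overline{h_{t-1}})=p_i(\overline{v_t})+c_{t,i}(\overline{h_{t-1}},f(\overline{v_t}))$; $v_{t,i}(\overline{h_{t-1}},\overline{a_t})=q_{t,i}(\overline{h_{t-1}},\overline{a_t})-c_{t,i}(\overline{h_{t-1}},\overline{a_t})$; here $\overline{v_t}=(v_{t,1}(\overline{h_{t-1}},\cdot),\dots,v_{t,k}(\overline{h_{t-1}},\cdot))$. Realisable cumulative utility. Given history $\overline{h_{t-1}}$, submitted functions $\overline{\widetilde v_t}$, joint action $\overline{a_t}=f(\overline{\widetilde v_t})$ and percept $\overline{or_t}\sim\phi(\cdot\mid\overline{h_{t-1}}\,\overline{a_t})$, agent $i$'s realisable cumulative utility at time $t$ is $r_{t,i}-p_i(\overline{\widetilde v_t})+\overline q_{t+1,i}(\overline{h_{t-1}}\,\overline{a_t}\,\overline{or_t})-\overline c_{t+1,i}(\overline{h_{t-1}}\,\overline{a_t}\,\overline{or_t})$. *)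

theory Defs
  imports Complex_Main
begin

text \<open>
  A joint history
  is a list of (joint action, joint percept) pairs, oldest first.
\<close>

type_synonym ('ag, 'a) jact = "'ag \<Rightarrow> 'a"
type_synonym ('ag, 'o) jperc = "'ag \<Rightarrow> 'o \<times> real"
type_synonym ('ag, 'a, 'o) jhist = "(('ag, 'a) jact \<times> ('ag, 'o) jperc) list"

definition rew :: "'ag \<Rightarrow> ('ag, 'o) jperc \<Rightarrow> real" where
  "rew i pc = snd (pc i)"

definition percepts :: "('ag \<Rightarrow> 'o set) \<Rightarrow> real set \<Rightarrow> ('ag, 'o) jperc set" where
  "percepts Obs R = {pc. \<forall>j. fst (pc j) \<in> Obs j \<and> snd (pc j) \<in> R}"

definition joint_actions :: "('ag \<Rightarrow> 'a set) \<Rightarrow> ('ag, 'a) jact set" where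
  "joint_actions A = {a. \<forall>j. a j \<in> A j}"

definition is_vcg_choice ::
  "('ag::finite, 'a) jact set \<Rightarrow> (('ag \<Rightarrow> ('ag, 'a) jact \<Rightarrow> real) \<Rightarrow> ('ag, 'a) jact) \<Rightarrow> bool" where
  "is_vcg_choice X f \<longleftrightarrow>
     (\<forall>v. f v \<in> X \<and> (\<forall>a\<in>X. (\<Sum>j\<in>UNIV. v j a) \<le> (\<Sum>j\<in>UNIV. v j (f v))))"

definition pay ::
  "('ag::finite, 'a) jact set \<Rightarrow> (('ag \<Rightarrow> ('ag, 'a) jact \<Rightarrow> real) \<Rightarrow> ('ag, 'a) jact)
   \<Rightarrow> 'ag \<Rightarrow> ('ag \<Rightarrow> ('ag, 'a) jact \<Rightarrow> real) \<Rightarrow> real" where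
  "pay X f i v = Max ((\<lambda>a. \<Sum>j\<in>UNIV - {i}. v j a) ` X) - (\<Sum>j\<in>UNIV - {i}. v j (f v))"

text \<open>
  Rational valuation functions, by backward induction.  q and c below are the paper's
  q_{t,i}(h_{t-1}, a_t) and c_{t,i}(h_{t-1}, a_t); the quantities qbar, cbar and v of the
  paper are unfolded inside the recursion and defined separately afterwards.
  phi h a pc is the probability of joint percept pc given history h and joint action a.
\<close>

context
  fixes X :: "('ag::finite, 'a) jact set"
    and f :: "('ag \<Rightarrow> ('ag, 'a) jact \<Rightarrow> real) \<Rightarrow> ('ag, 'a) jact"
    and Perc :: "('ag, 'o) jperc set"
    and phi :: "('ag, 'a, 'o) jhist \<Rightarrow> ('ag, 'a) jact \<Rightarrow> ('ag, 'o) jperc \<Rightarrow> real"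
    and m :: "'ag \<Rightarrow> nat"
begin

function qv :: "nat \<Rightarrow> 'ag \<Rightarrow> ('ag, 'a, 'o) jhist \<Rightarrow> ('ag, 'a) jact \<Rightarrow> real"
     and cv :: "nat \<Rightarrow> 'ag \<Rightarrow> ('ag, 'a, 'o) jhist \<Rightarrow> ('ag, 'a) jact \<Rightarrow> real" where
  "qv t i h a =
     (if t > m i then 0
      else (\<Sum>pc\<in>Perc. phi h a pc *
              (rew i pc +
               qv (Suc t) i (h @ [(a, pc)])
                  (f (\<lambda>j b. qv (Suc t) j (h @ [(a, pc)]) b - cv (Suc t) j (h @ [(a, pc)]) b)))))"
| "cv t i h a =
     (if t \<ge> m i then 0
      else (\<Sum>pc\<in>Perc. phi h a pc *
              (pay X f i (\<lambda>j b. qv (Suc t) j (h @ [(a, pc)]) b - cv (Suc t) j (h @ [(a, pc)]) b) +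
               cv (Suc t) i (h @ [(a, pc)])
                  (f (\<lambda>j b. qv (Suc t) j (h @ [(a, pc)]) b - cv (Suc t) j (h @ [(a, pc)]) b)))))"
  by pat_completeness auto

lemma hor_le_Max: "m i \<le> Max (range m)"
  by simp

termination
  by (relation "measure (\<lambda>x. case x of Inl (t, _) \<Rightarrow> Suc (Max (range m)) - t
                                       | Inr (t, _) \<Rightarrow> Suc (Max (range m)) - t)")
     (auto simp: not_less not_le dest!: order.strict_trans2[OF _ hor_le_Max] order.trans[OF _ hor_le_Max])

definition vv :: "nat \<Rightarrow> 'ag \<Rightarrow> ('ag, 'a, 'o) jhist \<Rightarrow> ('ag, 'a) jact \<Rightarrow> real" where
  "vv t i h a = qv t i h a - cv t i h a"

definition qbar :: "nat \<Rightarrow> 'ag \<Rightarrow> ('ag, 'a, 'o) jhist \<Rightarrow> real" where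
  "qbar t i h = qv t i h (f (\<lambda>j. vv t j h))"

definition cbar :: "nat \<Rightarrow> 'ag \<Rightarrow> ('ag, 'a, 'o) jhist \<Rightarrow> real" where
  "cbar t i h = pay X f i (\<lambda>j. vv t j h) + cv t i h (f (\<lambda>j. vv t j h))"

definition exp_util :: "nat \<Rightarrow> 'ag \<Rightarrow> ('ag, 'a, 'o) jhist \<Rightarrow> ('ag \<Rightarrow> ('ag, 'a) jact \<Rightarrow> real) \<Rightarrow> real" where
  "exp_util t i h vs =
     (let a = f vs in
      \<Sum>pc\<in>Perc. phi h a pc *
        (rew i pc - pay X f i vs + qbar (Suc t) i (h @ [(a, pc)]) - cbar (Suc t) i (h @ [(a, pc)])))"

end

end

theory Submission
  imports Defs
begin

text \<open>
  Unfolding the backward induction one step shows that agent i's expected realisable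
  cumulative utility after submitting some function is v_{t,i}(h, a) - p_i, where a is the
  selected joint action: the expectation of reward plus qbar - cbar at time t + 1 is exactly
  q_{t,i}(h, a) - c_{t,i}(h, a).  At the horizon t = m_i this uses that the Clarke payment of an
  agent whose valuation is identically zero vanishes.  So the randomness disappears and the claim
  becomes the truthfulness of the one-shot VCG mechanism with true valuations v_{t,j}(h, .): with
  Clarke pivot payments, agent i's utility is the social welfare of the selected joint action minus
  a term independent of agent i's report, and the welfare is maximal when i reports truthfully.
\<close>

lemma is_vcg_choiceD:
  assumes "is_vcg_choice X f"
  shows "f v \<in> X" and "a \<in> X \<Longrightarrow> (\<Sum>j\<in>UNIV. v j a) \<le> (\<Sum>j\<in>UNIV. v j (f v))"
  using assms unfolding is_vcg_choice_def by auto

lemma sum_UNIV_remove: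
  fixes v :: "'ag::finite \<Rightarrow> 'b \<Rightarrow> real"
  shows "(\<Sum>j\<in>UNIV. v j a) = v i a + (\<Sum>j\<in>UNIV - {i}. v j a)"
  by (simp add: sum.remove)

lemma pay_eq_0_if_valuation_eq_0:
  assumes "is_vcg_choice X f" and "finite X" and "\<And>a. v i a = 0"
  shows "pay X f i v = 0"
proof -
  have "(\<Sum>j\<in>UNIV - {i}. v j a) \<le> (\<Sum>j\<in>UNIV - {i}. v j (f v))" if "a \<in> X" for a
    using is_vcg_choiceD(2)[OF assms(1) that, of v] assms(3)
    by (simp add: sum_UNIV_remove[of v _ i])
  then have "Max ((\<lambda>a. \<Sum>j\<in>UNIV - {i}. v j a) ` X) = (\<Sum>j\<in>UNIV - {i}. v j (f v))"
    using assms(2) is_vcg_choiceD(1)[OF assms(1)] by (intro Max_eqI) auto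
  then show ?thesis
    unfolding pay_def by simp
qed

lemma pay_fun_upd:
  "pay X f i (v(i := w))
     = Max ((\<lambda>a. \<Sum>j\<in>UNIV - {i}. v j a) ` X) - (\<Sum>j\<in>UNIV - {i}. v j (f (v(i := w))))"
proof -
  have "(\<Sum>j\<in>UNIV - {i}. (v(i := w)) j a) = (\<Sum>j\<in>UNIV - {i}. v j a)" for a
    by (rule sum.cong) auto
  then show ?thesis
    unfolding pay_def by simp
qed

theorem vcg_truthful:
  assumes "is_vcg_choice X f"
  shows "v i (f (v(i := w))) - pay X f i (v(i := w)) \<le> v i (f v) - pay X f i v"
proof -
  define pivot where "pivot = Max ((\<lambda>a. \<Sum>j\<in>UNIV - {i}. v j a) ` X)"
  have utility: "v i (f (v(i := u))) - pay X f i (v(i := u))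
      = (\<Sum>j\<in>UNIV. v j (f (v(i := u)))) - pivot" for u
    unfolding pay_fun_upd pivot_def by (simp add: sum_UNIV_remove[of v _ i])
  have "(\<Sum>j\<in>UNIV. v j (f (v(i := w)))) \<le> (\<Sum>j\<in>UNIV. v j (f v))"
    using is_vcg_choiceD[OF assms] by blast
  then show ?thesis
    using utility[of w] utility[of "v i"] by simp
qed

declare qv.simps[simp del] cv.simps[simp del]

lemma qv_unfold:
  "qv X f Perc phi m t i h a =
     (if m i < t then 0
      else \<Sum>pc\<in>Perc. phi h a pc * (rew i pc + qbar X f Perc phi m (Suc t) i (h @ [(a, pc)])))"
  by (simp only: qv.simps[of X f Perc phi m t i h a] qbar_def vv_def[abs_def])

lemma cv_unfold:
  "cv X f Perc phi m t i h a =
     (if m i \<le> t then 0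
      else \<Sum>pc\<in>Perc. phi h a pc * cbar X f Perc phi m (Suc t) i (h @ [(a, pc)]))"
  by (simp only: cv.simps[of X f Perc phi m t i h a] cbar_def vv_def[abs_def])

lemma expected_continuation_eq_vv:
  assumes "is_vcg_choice X f" and "finite X" and "t \<le> m i"
  shows "(\<Sum>pc\<in>Perc. phi h a pc * (rew i pc + qbar X f Perc phi m (Suc t) i (h @ [(a, pc)])
            - cbar X f Perc phi m (Suc t) i (h @ [(a, pc)])))
         = vv X f Perc phi m t i h a"
proof (cases "t < m i")
  case True
  then show ?thesis
    unfolding vv_def qv_unfold[of X f Perc phi m t] cv_unfold[of X f Perc phi m t]
    by (simp add: sum_subtractf[symmetric] algebra_simps)
next
  case False
  with assms(3) have horizon: "m i < Suc t" by simp
  have qv_0: "qv X f Perc phi m (Suc t) i h' b = 0"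
    and cv_0: "cv X f Perc phi m (Suc t) i h' b = 0" for h' b
    using horizon by (simp_all add: qv_unfold cv_unfold)
  have "pay X f i (\<lambda>j. vv X f Perc phi m (Suc t) j h') = 0" for h'
    using assms(1,2) by (rule pay_eq_0_if_valuation_eq_0) (simp add: vv_def qv_0 cv_0)
  then have "qbar X f Perc phi m (Suc t) i h' = 0"
    and "cbar X f Perc phi m (Suc t) i h' = 0" for h'
    by (simp_all add: qbar_def cbar_def qv_0 cv_0)
  with False show ?thesis
    unfolding vv_def qv_unfold[of X f Perc phi m t] cv_unfold[of X f Perc phi m t]
    using assms(3) by simp
qed

lemma exp_util_eq_vv_minus_pay:
  assumes "is_vcg_choice X f" and "finite X" and "t \<le> m i"
    and "\<And>a. (\<Sum>pc\<in>Perc. phi h a pc) = 1"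
  shows "exp_util X f Perc phi m t i h vs = vv X f Perc phi m t i h (f vs) - pay X f i vs"
proof -
  have "exp_util X f Perc phi m t i h vs =
     (\<Sum>pc\<in>Perc. phi h (f vs) pc * (rew i pc + qbar X f Perc phi m (Suc t) i (h @ [(f vs, pc)])
          - cbar X f Perc phi m (Suc t) i (h @ [(f vs, pc)])))
     - (\<Sum>pc\<in>Perc. phi h (f vs) pc) * pay X f i vs"
    unfolding exp_util_def Let_def sum_distrib_right
    by (simp add: sum_subtractf[symmetric] algebra_simps)
  then show ?thesis
    using expected_continuation_eq_vv[where m = m and i = i, OF assms(1-3)] assms(4) by simp
qed

theorem corollary1:
  fixes A :: "'ag::finite \<Rightarrow> 'a set"
    and Obs :: "'ag \<Rightarrow> 'o set"
    and R :: "real set"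
    and X :: "('ag, 'a) jact set"
    and phi :: "('ag, 'a, 'o) jhist \<Rightarrow> ('ag, 'a) jact \<Rightarrow> ('ag, 'o) jperc \<Rightarrow> real"
    and f :: "('ag \<Rightarrow> ('ag, 'a) jact \<Rightarrow> real) \<Rightarrow> ('ag, 'a) jact"
    and m :: "'ag \<Rightarrow> nat"
    and t :: nat and i :: 'ag and h :: "('ag, 'a, 'o) jhist"
    and vtil :: "('ag, 'a) jact \<Rightarrow> real"
  assumes finA: "\<And>j. finite (A j)"
    and finO: "\<And>j. finite (Obs j)"
    and finR: "finite R"
    and X_sub: "X \<subseteq> joint_actions A"
    and X_ne: "X \<noteq> {}"
    and finX: "finite X"
    and phi_nonneg: "\<And>hh a pc. phi hh a pc \<ge> 0"
    and phi_sum: "\<And>hh a. (\<Sum>pc\<in>percepts Obs R. phi hh a pc) = 1"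
    and f_vcg: "is_vcg_choice X f"
    and t_pos: "1 \<le> t"
    and t_hor: "t \<le> m i"
    and h_len: "length h = t - 1"
  shows "exp_util X f (percepts Obs R) phi m t i h (\<lambda>j. vv X f (percepts Obs R) phi m t j h)
       \<ge> exp_util X f (percepts Obs R) phi m t i h ((\<lambda>j. vv X f (percepts Obs R) phi m t j h)(i := vtil))"
proof -
  define v where "v = (\<lambda>j. vv X f (percepts Obs R) phi m t j h)"
  have "v i (f (v(i := vtil))) - pay X f i (v(i := vtil)) \<le> v i (f v) - pay X f i v"
    using f_vcg by (rule vcg_truthful)
  then show ?thesis
    unfolding v_def exp_util_eq_vv_minus_pay[where m = m and i = i, OF f_vcg finX t_hor phi_sum]
    by simp
qed

end
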